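(* Let $d_{n,k}$ be the number of matchings of size $n$ with exactly $k$ occurrences of the endhered pattern $132$. Then, as formal power series, $$D(z,u):=\sum_{n\ge0}\sum_{k=0}^{n}d_{n,k}z^nu^k=F\big(z+(u-1)z^3\big)=\sum_{n\ge0}(2n-1)!!\,\big(z+(u-1)z^3\big)^n,$$ where $F(z)=\sum_{n\ge0}(2n-1)!!\,z^n$ and $(-1)!!=1$.
   Context: A matching of size $n$ is a set of $n$ arcs $(a,b)$ with $1\le a<b\le 2n$ such that each point of $\{1,\dots,2n\}$ belongs to exactly one arc (the empty matching has size $0$). For a permutation $\pi=\pi_1\dots\pi_p$ of $\{1,\dots,p\}$, a matching $\mu$ contains the endhered pattern $\pi$ at position $(i+1,j+1)$ (integers $i\ge0$, $j\ge i+p$) if for each $s=1,\dots,p$ the pair $(i+s,\,j+\pi^{-1}(s))$ is an arc of $\mu$. For $\pi=132$ this means $\mu$ has the three arcs $(i+1,j+1),(i+2,j+3),(i+3,j+2)$. The number of occurrences is the number of positions $(i+1,j+1)$ at which $\mu$ contains $\pi$. *)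

theory Defs
  imports "HOL-Computational_Algebra.Formal_Power_Series" "HOL-Computational_Algebra.Polynomial"
begin

definition is_matching :: "nat \<Rightarrow> (nat \<times> nat) set \<Rightarrow> bool" where
  "is_matching n M \<longleftrightarrow>
     M \<subseteq> {(a, b). 1 \<le> a \<and> a < b \<and> b \<le> 2 * n} \<and>
     (\<forall>x \<in> {1..2 * n}. \<exists>!p. p \<in> M \<and> (fst p = x \<or> snd p = x))"

definition matchings :: "nat \<Rightarrow> (nat \<times> nat) set set" where
  "matchings n = {M. is_matching n M}"

definition occ132 :: "(nat \<times> nat) set \<Rightarrow> (nat \<times> nat) set" where
  "occ132 M = {(i, j). j \<ge> i + 3 \<and> (i + 1, j + 1) \<in> M \<and> (i + 2, j + 3) \<in> M \<and> (i + 3, j + 2) \<in> M}"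

definition num_occ132 :: "(nat \<times> nat) set \<Rightarrow> nat" where
  "num_occ132 M = card (occ132 M)"

definition d132 :: "nat \<Rightarrow> nat \<Rightarrow> nat" where
  "d132 n k = card {M \<in> matchings n. num_occ132 M = k}"

definition odd_dfact :: "nat \<Rightarrow> nat" where
  "odd_dfact n = (\<Prod>i = 1..n. 2 * i - 1)"

definition F_fps :: "int poly fps" where
  "F_fps = Abs_fps (\<lambda>n. of_nat (odd_dfact n))"

text \<open>D(z,u) = sum_n sum_{k=0}^n d_{n,k} z^n u^k, as a power series in z over Z[u].\<close>
definition D_fps :: "int poly fps" where
  "D_fps = Abs_fps (\<lambda>n. \<Sum>k = 0..n. monom (int (d132 n k)) k)"

end

theory Submission
  imports Defs
begin

text \<open>Put \<open>u = 1 + t\<close>. By the binomial theorem the coefficient of \<open>z^n t^m\<close> in \<open>D\<close> is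
  the number \<open>A(n, m)\<close> of matchings of size \<open>n\<close> together with a set of \<open>m\<close> marked
  occurrences of 132, and distinct occurrences share no point. Contracting a marked occurrence,
  i.e. replacing its arcs \<open>(i+1, j+1), (i+2, j+3), (i+3, j+2)\<close> by the single arc
  \<open>(i+1, j-1)\<close> and closing the four gaps, maps matchings of size \<open>n + 2\<close> with \<open>m + 1\<close>
  marked occurrences, one of them distinguished, bijectively onto matchings of size \<open>n\<close> with
  \<open>m\<close> marked occurrences and a distinguished arc outside them. Hence
  \<open>(m + 1) A(n + 2, m + 1) = (n - 3m) A(n, m)\<close>, and since \<open>A(n, 0) = (2n - 1)!!\<close> this gives
  \<open>A(n, m) = C(n - 2m, m) (2(n - 2m) - 1)!!\<close>, the coefficient of \<open>z^n t^m\<close> in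
  \<open>F(z + t z^3)\<close>.\<close>

section \<open>Perfect matchings on a set of points\<close>

definition perfect_matching_on :: "nat set \<Rightarrow> (nat \<times> nat) set \<Rightarrow> bool" where
  "perfect_matching_on A M \<longleftrightarrow>
     (\<forall>p\<in>M. fst p < snd p \<and> fst p \<in> A \<and> snd p \<in> A) \<and>
     (\<forall>x\<in>A. \<exists>!p. p \<in> M \<and> (fst p = x \<or> snd p = x))"

definition endpoints :: "(nat \<times> nat) set \<Rightarrow> nat set" where
  "endpoints K = fst ` K \<union> snd ` K"

lemma matchings_iff_perfect_matching_on: "M \<in> matchings n \<longleftrightarrow> perfect_matching_on {1..2*n} M"
proof -
  have "(M \<subseteq> {(a, b). 1 \<le> a \<and> a < b \<and> b \<le> 2 * n}) \<longleftrightarrow>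
    (\<forall>p\<in>M. fst p < snd p \<and> fst p \<in> {1..2*n} \<and> snd p \<in> {1..2*n})"
    by fastforce
  then show ?thesis unfolding matchings_def is_matching_def perfect_matching_on_def by simp
qed

lemma perfect_matching_onI:
  assumes "\<And>a b. (a, b) \<in> M \<Longrightarrow> a < b \<and> a \<in> A \<and> b \<in> A"
    and "\<And>x. x \<in> A \<Longrightarrow> \<exists>p\<in>M. fst p = x \<or> snd p = x"
    and "\<And>p q. p \<in> M \<Longrightarrow> q \<in> M \<Longrightarrow>
      fst p = fst q \<or> fst p = snd q \<or> snd p = fst q \<or> snd p = snd q \<Longrightarrow> p = q"
  shows "perfect_matching_on A M"
proof -
  have "\<exists>!p. p \<in> M \<and> (fst p = x \<or> snd p = x)" if x: "x \<in> A" for x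
  proof -
    obtain p where p: "p \<in> M" "fst p = x \<or> snd p = x" using assms(2)[OF x] by blast
    then show ?thesis using assms(3)[of _ p] by (intro ex1I[of _ p]) auto
  qed
  moreover have "\<forall>p\<in>M. fst p < snd p \<and> fst p \<in> A \<and> snd p \<in> A"
    using assms(1) by force
  ultimately show ?thesis unfolding perfect_matching_on_def by blast
qed

context
  fixes A :: "nat set" and M :: "(nat \<times> nat) set"
  assumes pm: "perfect_matching_on A M"
begin

lemma perfect_matching_on_arcD: "(a, b) \<in> M \<Longrightarrow> a < b \<and> a \<in> A \<and> b \<in> A"
  using conjunct1[OF pm[unfolded perfect_matching_on_def]] by force

lemma perfect_matching_on_covers: "x \<in> A \<Longrightarrow> \<exists>p\<in>M. fst p = x \<or> snd p = x"
  using conjunct2[OF pm[unfolded perfect_matching_on_def]] by blast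

lemma perfect_matching_on_arc_eq:
  assumes "p \<in> M" "q \<in> M" "fst p = fst q \<or> fst p = snd q \<or> snd p = fst q \<or> snd p = snd q"
  shows "p = q"
proof -
  have "fst p \<in> A" "snd p \<in> A"
    using perfect_matching_on_arcD[of "fst p" "snd p"] assms(1) by auto
  then have u: "\<exists>!r. r \<in> M \<and> (fst r = fst p \<or> snd r = fst p)"
    "\<exists>!r. r \<in> M \<and> (fst r = snd p \<or> snd r = snd p)"
    using pm unfolding perfect_matching_on_def by blast+
  from assms(3) show ?thesis
  proof (elim disjE)
  qed (use u assms(1,2) in metis)+
qed

lemma perfect_matching_on_fst_eq: "(a, b) \<in> M \<Longrightarrow> (a, c) \<in> M \<Longrightarrow> b = c"
  using perfect_matching_on_arc_eq[of "(a, b)" "(a, c)"] by auto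

lemma perfect_matching_on_snd_eq: "(a, b) \<in> M \<Longrightarrow> (c, b) \<in> M \<Longrightarrow> a = c"
  using perfect_matching_on_arc_eq[of "(a, b)" "(c, b)"] by auto

lemma endpoint_notin_endpoints:
  assumes "K \<subseteq> M" "p \<in> M - K"
  shows "fst p \<notin> endpoints K" "snd p \<notin> endpoints K"
proof -
  have "fst k \<noteq> fst p \<and> snd k \<noteq> fst p \<and> fst k \<noteq> snd p \<and> snd k \<noteq> snd p" if "k \<in> K" for k
    using that assms perfect_matching_on_arc_eq[of k p] by blast
  then show "fst p \<notin> endpoints K" "snd p \<notin> endpoints K"
    unfolding endpoints_def by fastforce+
qed

lemma perfect_matching_on_Diff:
  assumes "K \<subseteq> M"
  shows "perfect_matching_on (A - endpoints K) (M - K)"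
proof (rule perfect_matching_onI)
  show "a < b \<and> a \<in> A - endpoints K \<and> b \<in> A - endpoints K" if "(a, b) \<in> M - K" for a b
    using that perfect_matching_on_arcD[of a b] endpoint_notin_endpoints[OF assms that] by simp
  show "\<exists>p\<in>M - K. fst p = x \<or> snd p = x" if x: "x \<in> A - endpoints K" for x
  proof -
    obtain p where "p \<in> M" "fst p = x \<or> snd p = x"
      using x perfect_matching_on_covers by blast
    moreover have "p \<notin> K" using calculation(2) x unfolding endpoints_def by auto
    ultimately show ?thesis by blast
  qed
qed (use perfect_matching_on_arc_eq in blast)

end

lemma perfect_matching_on_Un:
  assumes "perfect_matching_on A M" "perfect_matching_on B N" "A \<inter> B = {}"
  shows "perfect_matching_on (A \<union> B) (M \<union> N)"
proof (rule perfect_matching_onI)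
  show "a < b \<and> a \<in> A \<union> B \<and> b \<in> A \<union> B" if "(a, b) \<in> M \<union> N" for a b
    using that perfect_matching_on_arcD[OF assms(1)] perfect_matching_on_arcD[OF assms(2)] by blast
  show "\<exists>p\<in>M \<union> N. fst p = x \<or> snd p = x" if "x \<in> A \<union> B" for x
    using that perfect_matching_on_covers[OF assms(1)] perfect_matching_on_covers[OF assms(2)] by blast
  fix p q assume pq: "p \<in> M \<union> N" "q \<in> M \<union> N"
    and meet: "fst p = fst q \<or> fst p = snd q \<or> snd p = fst q \<or> snd p = snd q"
  have "fst r \<in> A \<and> snd r \<in> A" if "r \<in> M" for r
    using that perfect_matching_on_arcD[OF assms(1), of "fst r" "snd r"] by simp
  moreover have "fst r \<in> B \<and> snd r \<in> B" if "r \<in> N" for r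
    using that perfect_matching_on_arcD[OF assms(2), of "fst r" "snd r"] by simp
  ultimately have "\<not> (p \<in> M \<and> q \<in> N)" "\<not> (p \<in> N \<and> q \<in> M)"
    using meet assms(3) by (metis disjoint_iff)+
  then show "p = q"
    using pq meet perfect_matching_on_arc_eq[OF assms(1)] perfect_matching_on_arc_eq[OF assms(2)]
    by blast
qed

lemma perfect_matching_on_image:
  assumes pm: "perfect_matching_on A M" and mono: "strict_mono_on A f"
  shows "perfect_matching_on (f ` A) (map_prod f f ` M)"
proof (rule perfect_matching_onI)
  note arc = perfect_matching_on_arcD[OF pm]
  show "a < b \<and> a \<in> f ` A \<and> b \<in> f ` A" if ab: "(a, b) \<in> map_prod f f ` M" for a b
  proof -
    obtain x y where "(x, y) \<in> M" "a = f x" "b = f y" using ab by auto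
    then show ?thesis using arc[of x y] strict_mono_onD[OF mono] by auto
  qed
  show "\<exists>p\<in>map_prod f f ` M. fst p = x \<or> snd p = x" if "x \<in> f ` A" for x
  proof -
    obtain y where y: "y \<in> A" "x = f y" using \<open>x \<in> f ` A\<close> by blast
    then obtain p where "p \<in> M" "fst p = y \<or> snd p = y"
      using perfect_matching_on_covers[OF pm] by blast
    then show ?thesis using y by (intro bexI[of _ "map_prod f f p"]) auto
  qed
  fix p q assume "p \<in> map_prod f f ` M" "q \<in> map_prod f f ` M"
    and meet: "fst p = fst q \<or> fst p = snd q \<or> snd p = fst q \<or> snd p = snd q"
  then obtain a b c d where abcd: "(a, b) \<in> M" "(c, d) \<in> M" "p = (f a, f b)" "q = (f c, f d)"
    by auto
  have "inj_on f A" using mono by (rule strict_mono_on_imp_inj_on)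
  then have "a = c \<or> a = d \<or> b = c \<or> b = d"
    using meet abcd arc[of a b] arc[of c d] by (auto dest: inj_onD)
  then show "p = q" using perfect_matching_on_arc_eq[OF pm abcd(1,2)] abcd(3,4) by auto
qed

lemma perfect_matching_on_subset_Times: "perfect_matching_on A M \<Longrightarrow> M \<subseteq> A \<times> A"
  using perfect_matching_on_arcD by fast

lemma endpoints_perfect_matching_on: "perfect_matching_on A M \<Longrightarrow> endpoints M = A"
  using perfect_matching_on_covers perfect_matching_on_subset_Times
  unfolding endpoints_def by fastforce

lemma card_perfect_matching_on:
  assumes pm: "perfect_matching_on A M" and "finite A"
  shows "card A = 2 * card M"
proof -
  note arc_eq = perfect_matching_on_arc_eq[OF pm]
  have fin: "finite M"
    using finite_subset[OF perfect_matching_on_subset_Times[OF pm]] assms(2) by blast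
  have "A = fst ` M \<union> snd ` M"
    using endpoints_perfect_matching_on[OF pm] unfolding endpoints_def by simp
  moreover have "fst ` M \<inter> snd ` M = {}"
  proof (rule ccontr)
    assume "fst ` M \<inter> snd ` M \<noteq> {}"
    then obtain p q where pq: "p \<in> M" "q \<in> M" "fst p = snd q" by force
    then have "p = q" using arc_eq by blast
    then show False using pq perfect_matching_on_arcD[OF pm, of "fst q" "snd q"] by (metis prod.collapse less_irrefl)
  qed
  moreover have "inj_on fst M" "inj_on snd M"
    by (intro inj_onI, simp add: arc_eq)+
  ultimately show ?thesis using fin by (simp add: card_Un_disjoint card_image)
qed

lemma map_prod_image_inverse:
  assumes "\<And>x. x \<in> endpoints M \<Longrightarrow> g (f x) = x"
  shows "map_prod g g ` map_prod f f ` M = M"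
proof -
  have "map_prod g g (map_prod f f p) = p" if "p \<in> M" for p
    using that assms[of "fst p"] assms[of "snd p"] unfolding endpoints_def by (cases p) force
  then show ?thesis by (simp add: image_image)
qed

section \<open>The number of matchings\<close>

lemma finite_matchings: "finite (matchings n)"
proof (rule finite_subset)
  show "matchings n \<subseteq> Pow ({1..2*n} \<times> {1..2*n})"
  proof
    fix M assume "M \<in> matchings n"
    then show "M \<in> Pow ({1..2*n} \<times> {1..2*n})"
      using perfect_matching_on_subset_Times by (simp add: matchings_iff_perfect_matching_on)
  qed
qed simp

lemma card_matching: "M \<in> matchings n \<Longrightarrow> card M = n"
  using card_perfect_matching_on[of "{1..2*n}" M] by (simp add: matchings_iff_perfect_matching_on)

lemma finite_matching: "M \<in> matchings n \<Longrightarrow> finite M"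
  using finite_subset[OF perfect_matching_on_subset_Times] by (simp add: matchings_iff_perfect_matching_on)

text \<open>Relabelling of the points when the points \<open>1\<close> and \<open>b\<close> are deleted (\<open>close_1b\<close>)
  or inserted (\<open>open_1b\<close>).\<close>

definition close_1b :: "nat \<Rightarrow> nat \<Rightarrow> nat" where
  "close_1b b x = (if x < b then x - 1 else x - 2)"

definition open_1b :: "nat \<Rightarrow> nat \<Rightarrow> nat" where
  "open_1b b y = (if y + 2 \<le> b then y + 1 else y + 2)"

lemma close_1b_open_1b [simp]: "close_1b b (open_1b b y) = y"
  unfolding close_1b_def open_1b_def by auto

lemma open_1b_close_1b: "x \<in> {1..2*n+2} - {1, b} \<Longrightarrow> open_1b b (close_1b b x) = x"
  unfolding close_1b_def open_1b_def by auto

lemma strict_mono_on_open_1b: "strict_mono_on A (open_1b b)"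
  unfolding strict_mono_on_def open_1b_def by auto

lemma strict_mono_on_close_1b: "strict_mono_on ({1..2*n+2} - {1, b}) (close_1b b)"
  unfolding strict_mono_on_def close_1b_def by auto

lemma open_1b_image:
  assumes "2 \<le> b" "b \<le> 2*n+2"
  shows "open_1b b ` {1..2*n} = {1..2*n+2} - {1, b}"
proof
  show "open_1b b ` {1..2*n} \<subseteq> {1..2*n+2} - {1, b}"
    using assms unfolding open_1b_def by auto
  show "{1..2*n+2} - {1, b} \<subseteq> open_1b b ` {1..2*n}"
  proof
    fix x assume x: "x \<in> {1..2*n+2} - {1, b}"
    then have "close_1b b x \<in> {1..2*n}" using assms unfolding close_1b_def by auto
    then show "x \<in> open_1b b ` {1..2*n}" using open_1b_close_1b[OF x] by force
  qed
qed

lemma close_1b_image: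
  assumes "2 \<le> b" "b \<le> 2*n+2"
  shows "close_1b b ` ({1..2*n+2} - {1, b}) = {1..2*n}"
  unfolding open_1b_image[OF assms, symmetric] image_image by simp

lemma matching_remove_arc_from_1:
  assumes M: "M \<in> matchings (Suc n)" and arc: "(1, b) \<in> M"
  defines "M' \<equiv> map_prod (close_1b b) (close_1b b) ` (M - {(1, b)})"
  shows "M' \<in> matchings n" and "insert (1, b) (map_prod (open_1b b) (open_1b b) ` M') = M"
proof -
  have pm: "perfect_matching_on {1..2*n+2} M"
    using M by (simp add: matchings_iff_perfect_matching_on)
  then have b: "2 \<le> b" "b \<le> 2*n+2" using perfect_matching_on_arcD[OF pm arc] by auto
  have "endpoints {(1, b)} = {1, b}" by (auto simp: endpoints_def)
  then have pm': "perfect_matching_on ({1..2*n+2} - {1, b}) (M - {(1, b)})"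
    using perfect_matching_on_Diff[OF pm, of "{(1, b)}"] arc by simp
  from perfect_matching_on_image[OF this strict_mono_on_close_1b]
  have "perfect_matching_on {1..2*n} M'"
    unfolding M'_def by (simp only: close_1b_image[OF b])
  then show "M' \<in> matchings n" by (simp add: matchings_iff_perfect_matching_on)
  have "endpoints (M - {(1, b)}) = {1..2*n+2} - {1, b}"
    using pm' by (rule endpoints_perfect_matching_on)
  then have "map_prod (open_1b b) (open_1b b) ` M' = M - {(1, b)}"
    unfolding M'_def using open_1b_close_1b by (intro map_prod_image_inverse) blast
  then show "insert (1, b) (map_prod (open_1b b) (open_1b b) ` M') = M"
    using arc insert_Diff[of "(1, b)" M] by simp
qed

lemma matching_insert_arc_from_1:
  assumes M: "M \<in> matchings n" and b: "2 \<le> b" "b \<le> 2*n+2"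
  defines "M' \<equiv> insert (1, b) (map_prod (open_1b b) (open_1b b) ` M)"
  shows "M' \<in> matchings (Suc n)" and "map_prod (close_1b b) (close_1b b) ` (M' - {(1, b)}) = M"
proof -
  from M have pm: "perfect_matching_on {1..2*n} M" by (simp add: matchings_iff_perfect_matching_on)
  from perfect_matching_on_image[OF this strict_mono_on_open_1b[of _ b]]
  have "perfect_matching_on ({1..2*n+2} - {1, b}) (map_prod (open_1b b) (open_1b b) ` M)"
    by (simp only: open_1b_image[OF b])
  moreover have "perfect_matching_on {1, b} {(1, b)}"
    by (rule perfect_matching_onI) (use b in auto)
  ultimately have "perfect_matching_on (({1..2*n+2} - {1, b}) \<union> {1, b})
      (map_prod (open_1b b) (open_1b b) ` M \<union> {(1, b)})"
    by (rule perfect_matching_on_Un) auto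
  moreover have "({1..2*n+2} - {1, b}) \<union> {1, b} = {1..2 * Suc n}" using b by auto
  ultimately show "M' \<in> matchings (Suc n)"
    unfolding M'_def by (simp add: matchings_iff_perfect_matching_on)
  have "(1, b) \<notin> map_prod (open_1b b) (open_1b b) ` M"
  proof
    assume "(1, b) \<in> map_prod (open_1b b) (open_1b b) ` M"
    then obtain y z where "(y, z) \<in> M" "open_1b b y = 1" by auto
    then show False
      using perfect_matching_on_arcD[OF pm, of y z] unfolding open_1b_def by (auto split: if_splits)
  qed
  then have "M' - {(1, b)} = map_prod (open_1b b) (open_1b b) ` M" unfolding M'_def by blast
  then show "map_prod (close_1b b) (close_1b b) ` (M' - {(1, b)}) = M"
    by (simp add: map_prod_image_inverse)
qed

lemma card_matchings_with_arc_from_1: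
  assumes "2 \<le> b" "b \<le> 2*n+2"
  shows "card {M \<in> matchings (Suc n). (1, b) \<in> M} = card (matchings n)"
proof -
  let ?close = "\<lambda>M. map_prod (close_1b b) (close_1b b) ` (M - {(1, b)})"
  let ?open = "\<lambda>M. insert (1, b) (map_prod (open_1b b) (open_1b b) ` M)"
  have "bij_betw ?close {M \<in> matchings (Suc n). (1, b) \<in> M} (matchings n)"
  proof (rule bij_betw_byWitness[where f' = ?open])
    show "\<forall>M\<in>{M \<in> matchings (Suc n). (1, b) \<in> M}. ?open (?close M) = M"
      using matching_remove_arc_from_1(2) by blast
    show "\<forall>M\<in>matchings n. ?close (?open M) = M"
      using matching_insert_arc_from_1(2)[OF _ assms] by blast
    show "?close ` {M \<in> matchings (Suc n). (1, b) \<in> M} \<subseteq> matchings n"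
      using matching_remove_arc_from_1(1) by blast
    show "?open ` matchings n \<subseteq> {M \<in> matchings (Suc n). (1, b) \<in> M}"
      using matching_insert_arc_from_1(1)[OF _ assms] by blast
  qed
  then show ?thesis by (rule bij_betw_same_card)
qed

lemma card_matchings_Suc: "card (matchings (Suc n)) = (2*n+1) * card (matchings n)"
proof -
  let ?F = "\<lambda>b. {M \<in> matchings (Suc n). (1, b) \<in> M}"
  have "matchings (Suc n) = (\<Union>b\<in>{2..2*n+2}. ?F b)"
  proof (intro equalityI subsetI)
    fix M assume M: "M \<in> matchings (Suc n)"
    then have pm: "perfect_matching_on {1..2*n+2} M" by (simp add: matchings_iff_perfect_matching_on)
    obtain p where p: "p \<in> M" "fst p = 1 \<or> snd p = 1"
      using perfect_matching_on_covers[OF pm, of 1] by auto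
    then have "fst p = 1" "snd p \<in> {2..2*n+2}"
      using perfect_matching_on_arcD[OF pm, of "fst p" "snd p"] by auto
    then have "(1, snd p) \<in> M" "snd p \<in> {2..2*n+2}" using p(1) by (metis prod.collapse)+
    with M show "M \<in> (\<Union>b\<in>{2..2*n+2}. ?F b)" by blast
  qed auto
  then have "card (matchings (Suc n)) = card (\<Union>b\<in>{2..2*n+2}. ?F b)" by (rule arg_cong)
  also have "\<dots> = (\<Sum>b\<in>{2..2*n+2}. card (?F b))"
  proof (rule card_UN_disjoint)
    have "?F b \<inter> ?F c = {}" if "b \<noteq> c" for b c
      using that perfect_matching_on_fst_eq[of "{1..2 * Suc n}" _ 1 b c]
      by (auto simp: matchings_iff_perfect_matching_on)
    then show "\<forall>b\<in>{2..2*n+2}. \<forall>c\<in>{2..2*n+2}. b \<noteq> c \<longrightarrow> ?F b \<inter> ?F c = {}" by blast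
  qed (simp_all add: finite_matchings)
  also have "\<dots> = (\<Sum>b\<in>{2..2*n+2}. card (matchings n))"
    by (intro sum.cong refl card_matchings_with_arc_from_1) auto
  also have "\<dots> = (2*n+1) * card (matchings n)" by simp
  finally show ?thesis .
qed

lemma matchings_0: "matchings 0 = {{}}"
proof -
  have "perfect_matching_on {} {}" by (rule perfect_matching_onI) auto
  then have "M \<in> matchings 0 \<longleftrightarrow> M = {}" for M
    using perfect_matching_on_subset_Times[of "{}" M] by (auto simp: matchings_iff_perfect_matching_on)
  then show ?thesis by blast
qed

lemma card_matchings: "card (matchings n) = odd_dfact n"
proof (induction n)
  case (Suc n)
  have "odd_dfact (Suc n) = (2 * Suc n - 1) * odd_dfact n"
    unfolding odd_dfact_def by (simp add: prod.nat_ivl_Suc')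
  then show ?case using Suc card_matchings_Suc by simp
qed (simp add: matchings_0 odd_dfact_def)

section \<open>Occurrences of 132 and marked matchings\<close>

fun occ_arcs :: "nat \<times> nat \<Rightarrow> (nat \<times> nat) set" where
  "occ_arcs (i, j) = {(i + 1, j + 1), (i + 2, j + 3), (i + 3, j + 2)}"

lemma mem_occ132_iff: "(i, j) \<in> occ132 M \<longleftrightarrow> i + 3 \<le> j \<and> occ_arcs (i, j) \<subseteq> M"
  unfolding occ132_def by auto

lemma endpoints_occ_arcs: "endpoints (occ_arcs (i, j)) = {i + 1, i + 2, i + 3, j + 1, j + 2, j + 3}"
  unfolding endpoints_def by auto

lemma card_occ_arcs: "card (occ_arcs x) = 3"
  by (cases x) simp

lemma finite_occ_arcs: "finite (occ_arcs x)"
  by (cases x) simp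

lemma occ132_eq_if_arcs_meet:
  assumes pm: "perfect_matching_on A M"
    and occ: "(a, b) \<in> occ132 M" "(c, d) \<in> occ132 M"
    and meet: "occ_arcs (a, b) \<inter> occ_arcs (c, d) \<noteq> {}"
  shows "(a, b) = (c, d)"
proof -
  have arcs: "(a+1, b+1) \<in> M" "(a+2, b+3) \<in> M" "(a+3, b+2) \<in> M"
    "(c+1, d+1) \<in> M" "(c+2, d+3) \<in> M" "(c+3, d+2) \<in> M"
    using occ unfolding occ132_def by auto
  have fst_eq: "y = y'" if "(x, y) \<in> M" "(x', y') \<in> M" "x = x'" for x y x' y'
    using that perfect_matching_on_fst_eq[OF pm] by blast
  have snd_eq: "x = x'" if "(x, y) \<in> M" "(x', y') \<in> M" "y = y'" for x y x' y'
    using that perfect_matching_on_snd_eq[OF pm] by blast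
  from meet consider "a = c" "b = d"
    | "a = c + 1" "b = d + 2" | "a = c + 2" "b = d + 1" | "c = a + 1" "d = b + 2"
    | "a = c + 1" "d = b + 1" | "c = a + 2" "d = b + 1" | "c = a + 1" "b = d + 1"
    by auto
  then show ?thesis
  proof cases
    case 2 then show ?thesis using fst_eq[OF arcs(2) arcs(6)] by simp
  next
    case 3 then show ?thesis using snd_eq[OF arcs(3) arcs(5)] by simp
  next
    case 4 then show ?thesis using fst_eq[OF arcs(5) arcs(3)] by simp
  next
    case 5 then show ?thesis using fst_eq[OF arcs(1) arcs(5)] by simp
  next
    case 6 then show ?thesis using snd_eq[OF arcs(6) arcs(2)] by simp
  next
    case 7 then show ?thesis using fst_eq[OF arcs(4) arcs(2)] by simp
  qed simp
qed

lemma occ132_endpoints_disjoint: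
  assumes pm: "perfect_matching_on A M" and occ: "x \<in> occ132 M" "y \<in> occ132 M" "x \<noteq> y"
  shows "endpoints (occ_arcs x) \<inter> endpoints (occ_arcs y) = {}"
proof (rule ccontr)
  assume "endpoints (occ_arcs x) \<inter> endpoints (occ_arcs y) \<noteq> {}"
  then obtain r s where r: "r \<in> occ_arcs x" and s: "s \<in> occ_arcs y"
    and meet: "fst r = fst s \<or> fst r = snd s \<or> snd r = fst s \<or> snd r = snd s"
    unfolding endpoints_def by blast
  have "occ_arcs x \<subseteq> M" "occ_arcs y \<subseteq> M"
    using occ mem_occ132_iff[of "fst x" "snd x"] mem_occ132_iff[of "fst y" "snd y"] by auto
  then have "r = s" using perfect_matching_on_arc_eq[OF pm _ _ meet] r s by blast
  then have "occ_arcs x \<inter> occ_arcs y \<noteq> {}" using r s by blast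
  then show False
    using occ132_eq_if_arcs_meet[OF pm, of "fst x" "snd x" "fst y" "snd y"] occ by simp
qed

lemma occ132_arcs_disjoint:
  assumes "perfect_matching_on A M" "x \<in> occ132 M" "y \<in> occ132 M" "x \<noteq> y"
  shows "occ_arcs x \<inter> occ_arcs y = {}"
  using occ132_endpoints_disjoint[OF assms] unfolding endpoints_def by blast

lemma occ132_subset_image: "occ132 M \<subseteq> (\<lambda>(i, j). (i - 1, j - 1)) ` M"
  unfolding occ132_def by force

lemma finite_occ132: "M \<in> matchings n \<Longrightarrow> finite (occ132 M)"
  using finite_subset[OF occ132_subset_image] finite_matching by blast

lemma num_occ132_le: "M \<in> matchings n \<Longrightarrow> num_occ132 M \<le> n"
proof -
  assume M: "M \<in> matchings n"
  have "inj_on (\<lambda>(i, j). (i + 1, j + 1)) (occ132 M)" by (auto intro: inj_onI)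
  moreover have "(\<lambda>(i, j). (i + 1, j + 1)) ` occ132 M \<subseteq> M" unfolding occ132_def by auto
  ultimately show ?thesis
    unfolding num_occ132_def using card_inj_on_le finite_matching[OF M] card_matching[OF M] by metis
qed

lemma occ132_empty_if_small: "M \<in> matchings n \<Longrightarrow> n < 2 \<Longrightarrow> occ132 M = {}"
proof (rule ccontr)
  assume M: "M \<in> matchings n" and n: "n < 2" and "occ132 M \<noteq> {}"
  then obtain i j where "(i, j) \<in> occ132 M" by auto
  then have "3 \<le> j" "(i + 2, j + 3) \<in> M" unfolding occ132_def by auto
  moreover have "perfect_matching_on {1..2*n} M" using M by (simp add: matchings_iff_perfect_matching_on)
  ultimately show False using perfect_matching_on_arcD[of _ M "i + 2" "j + 3"] n by fastforce
qed

definition marked_matchings :: "nat \<Rightarrow> nat \<Rightarrow> ((nat \<times> nat) set \<times> (nat \<times> nat) set) set" where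
  "marked_matchings n m = {(M, S). M \<in> matchings n \<and> S \<subseteq> occ132 M \<and> card S = m}"

type_synonym pointed_marked_matching = "((nat \<times> nat) set \<times> (nat \<times> nat) set) \<times> nat \<times> nat"

definition marked_pointed_occ :: "nat \<Rightarrow> nat \<Rightarrow> pointed_marked_matching set" where
  "marked_pointed_occ n m = Sigma (marked_matchings n m) snd"

definition marked_pointed_arc :: "nat \<Rightarrow> nat \<Rightarrow> pointed_marked_matching set" where
  "marked_pointed_arc n m = Sigma (marked_matchings n m) (\<lambda>(M, S). M - \<Union>(occ_arcs ` S))"

lemma marked_matchings_Sigma:
  "marked_matchings n m = Sigma (matchings n) (\<lambda>M. {S. S \<subseteq> occ132 M \<and> card S = m})"
  unfolding marked_matchings_def by auto

lemma finite_marked_matchings: "finite (marked_matchings n m)"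
  unfolding marked_matchings_Sigma using finite_matchings finite_occ132
  by (intro finite_SigmaI) auto

lemma card_marked_matchings_eq_sum:
  "card (marked_matchings n m) = (\<Sum>M\<in>matchings n. num_occ132 M choose m)"
proof -
  have "card (marked_matchings n m) = (\<Sum>M\<in>matchings n. card {S. S \<subseteq> occ132 M \<and> card S = m})"
    unfolding marked_matchings_Sigma
    by (rule card_SigmaI) (use finite_matchings finite_occ132 in auto)
  also have "\<dots> = (\<Sum>M\<in>matchings n. num_occ132 M choose m)"
    unfolding num_occ132_def by (rule sum.cong) (auto simp: n_subsets finite_occ132)
  finally show ?thesis .
qed

lemma card_marked_pointed_occ: "card (marked_pointed_occ n m) = m * card (marked_matchings n m)"
proof -
  have "card (marked_pointed_occ n m) = (\<Sum>x\<in>marked_matchings n m. card (snd x))"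
    unfolding marked_pointed_occ_def
    by (rule card_SigmaI[OF finite_marked_matchings])
      (auto simp: marked_matchings_def dest: finite_occ132 intro: finite_subset)
  also have "\<dots> = (\<Sum>x\<in>marked_matchings n m. m)"
    by (rule sum.cong) (auto simp: marked_matchings_def)
  finally show ?thesis by simp
qed

lemma card_occ_arcs_Union:
  assumes M: "M \<in> matchings n" and S: "S \<subseteq> occ132 M"
  shows "card (\<Union>(occ_arcs ` S)) = 3 * card S"
proof -
  have pm: "perfect_matching_on {1..2*n} M" using M by (simp add: matchings_iff_perfect_matching_on)
  have "finite S" using finite_subset[OF S finite_occ132[OF M]] .
  moreover have "\<forall>x\<in>S. \<forall>y\<in>S. x \<noteq> y \<longrightarrow> occ_arcs x \<inter> occ_arcs y = {}"
    using occ132_arcs_disjoint[OF pm] S by blast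
  ultimately have "card (\<Union>(occ_arcs ` S)) = (\<Sum>x\<in>S. card (occ_arcs x))"
    by (intro card_UN_disjoint) (auto simp: finite_occ_arcs)
  then show ?thesis by (simp add: card_occ_arcs)
qed

lemma card_marked_pointed_arc:
  "card (marked_pointed_arc n m) = (n - 3 * m) * card (marked_matchings n m)"
proof -
  let ?free = "\<lambda>(M, S). M - \<Union>(occ_arcs ` S)"
  have "card (marked_pointed_arc n m) = (\<Sum>x\<in>marked_matchings n m. card (?free x))"
    unfolding marked_pointed_arc_def
    by (rule card_SigmaI[OF finite_marked_matchings])
      (auto simp: marked_matchings_def dest: finite_matching)
  also have "\<dots> = (\<Sum>x\<in>marked_matchings n m. n - 3 * m)"
  proof (rule sum.cong)
    fix x assume "x \<in> marked_matchings n m"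
    then obtain M S where x: "x = (M, S)" "M \<in> matchings n" "S \<subseteq> occ132 M" "card S = m"
      unfolding marked_matchings_def by auto
    have "\<Union>(occ_arcs ` S) \<subseteq> M"
      using x(3) mem_occ132_iff by fastforce
    then have "card (M - \<Union>(occ_arcs ` S)) = card M - card (\<Union>(occ_arcs ` S))"
      using finite_matching[OF x(2)] by (intro card_Diff_subset) (auto intro: finite_subset)
    then show "card (?free x) = n - 3 * m"
      using card_matching[OF x(2)] card_occ_arcs_Union[OF x(2,3)] x(1,4) by simp
  qed simp
  finally show ?thesis by simp
qed

lemma occ132_mono: "M \<subseteq> N \<Longrightarrow> occ132 M \<subseteq> occ132 N"
  unfolding occ132_def by auto

section \<open>Contracting an occurrence\<close>

text \<open>\<open>map_occ f\<close> moves an occurrence by moving its first arc \<open>(a + 1, b + 1)\<close> with \<open>f\<close>;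
  the result is the image occurrence as long as \<open>f\<close> keeps each of the triples
  \<open>a + 1, a + 2, a + 3\<close> and \<open>b + 1, b + 2, b + 3\<close> consecutive.\<close>

fun map_occ :: "(nat \<Rightarrow> nat) \<Rightarrow> nat \<times> nat \<Rightarrow> nat \<times> nat" where
  "map_occ f (a, b) = (f (a + 1) - 1, f (b + 1) - 1)"

lemma occ_arcs_map_occ:
  assumes step: "\<forall>x\<in>{a + 1, a + 2, b + 1, b + 2}. f (x + 1) = f x + 1"
    and pos: "0 < f (a + 1)" "0 < f (b + 1)"
  shows "occ_arcs (map_occ f (a, b)) = map_prod f f ` occ_arcs (a, b)"
proof -
  have "f (a + 2) = f (a + 1) + 1" "f (a + 3) = f (a + 1) + 2"
    "f (b + 2) = f (b + 1) + 1" "f (b + 3) = f (b + 1) + 2"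
    using step by (simp_all add: eval_nat_numeral)
  then show ?thesis using pos by (simp add: eval_nat_numeral)
qed

lemma map_occ_mem_occ132:
  assumes occ: "(a, b) \<in> occ132 M" and sub: "occ_arcs (a, b) \<subseteq> N"
    and mono: "strict_mono_on X f" "endpoints (occ_arcs (a, b)) \<subseteq> X"
    and step: "\<forall>x\<in>{a + 1, a + 2, b + 1, b + 2}. f (x + 1) = f x + 1"
    and pos: "0 < f (a + 1)" "0 < f (b + 1)"
  shows "map_occ f (a, b) \<in> occ132 (map_prod f f ` N)"
proof -
  have "a + 3 < b + 1" using occ by (simp add: mem_occ132_iff)
  moreover have "a + 3 \<in> X" "b + 1 \<in> X" using mono(2) unfolding endpoints_occ_arcs by simp_all
  ultimately have "f (a + 3) < f (b + 1)" using strict_mono_onD[OF mono(1)] by blast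
  moreover have "f (a + 3) = f (a + 1) + 2" using step by (simp add: eval_nat_numeral)
  ultimately have "fst (map_occ f (a, b)) + 3 \<le> snd (map_occ f (a, b))" using pos by simp
  moreover have "occ_arcs (map_occ f (a, b)) \<subseteq> map_prod f f ` N"
    using occ_arcs_map_occ[OF step pos] sub by auto
  ultimately show ?thesis using mem_occ132_iff by (metis prod.collapse)
qed

lemma map_occ_map_occ:
  assumes "0 < f (a + 1)" "0 < f (b + 1)" "g (f (a + 1)) = a + 1" "g (f (b + 1)) = b + 1"
  shows "map_occ g (map_occ f (a, b)) = (a, b)"
  using assms by simp

text \<open>Contracting an occurrence at \<open>(i, j)\<close> deletes the four points \<open>occ_gap i j\<close> of its
  arcs \<open>inner_arcs i j\<close> and relabels the remaining points by \<open>close_occ i j\<close>, so that its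
  first arc \<open>(i + 1, j + 1)\<close> becomes \<open>(i + 1, j - 1)\<close>; \<open>open_occ i j\<close> is the inverse
  relabelling.\<close>

definition occ_gap :: "nat \<Rightarrow> nat \<Rightarrow> nat set" where
  "occ_gap i j = {i + 2, i + 3, j + 2, j + 3}"

definition inner_arcs :: "nat \<Rightarrow> nat \<Rightarrow> (nat \<times> nat) set" where
  "inner_arcs i j = {(i + 2, j + 3), (i + 3, j + 2)}"

definition close_occ :: "nat \<Rightarrow> nat \<Rightarrow> nat \<Rightarrow> nat" where
  "close_occ i j x = (if x \<le> i + 1 then x else if x \<le> j + 1 then x - 2 else x - 4)"

definition open_occ :: "nat \<Rightarrow> nat \<Rightarrow> nat \<Rightarrow> nat" where
  "open_occ i j y = (if y \<le> i + 1 then y else if y < j then y + 2 else y + 4)"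

lemma endpoints_inner_arcs: "endpoints (inner_arcs i j) = occ_gap i j"
  unfolding endpoints_def inner_arcs_def occ_gap_def by auto

lemma inner_arcs_subset_occ_arcs: "inner_arcs i j \<subseteq> occ_arcs (i, j)"
  unfolding inner_arcs_def by auto

lemma occ_gap_subset_endpoints: "occ_gap i j \<subseteq> endpoints (occ_arcs (i, j))"
  unfolding occ_gap_def endpoints_occ_arcs by auto

lemma le_open_occ: "y \<le> open_occ i j y"
  unfolding open_occ_def by auto

context
  fixes i j :: nat
  assumes ij: "i + 3 \<le> j"
begin

lemma open_occ_close_occ: "x \<notin> occ_gap i j \<Longrightarrow> open_occ i j (close_occ i j x) = x"
  using ij unfolding open_occ_def close_occ_def occ_gap_def by auto

lemma close_occ_open_occ [simp]: "close_occ i j (open_occ i j y) = y"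
  using ij unfolding open_occ_def close_occ_def by auto

lemma open_occ_notin_occ_gap: "open_occ i j y \<notin> occ_gap i j"
  using ij unfolding open_occ_def occ_gap_def by auto

lemma strict_mono_on_open_occ: "strict_mono_on X (open_occ i j)"
  using ij unfolding open_occ_def strict_mono_on_def by auto

lemma strict_mono_on_close_occ: "strict_mono_on (- occ_gap i j) (close_occ i j)"
  using ij unfolding close_occ_def strict_mono_on_def occ_gap_def by auto

lemma close_occ_pos: "0 < x \<Longrightarrow> x \<notin> occ_gap i j \<Longrightarrow> 0 < close_occ i j x"
  using ij unfolding close_occ_def occ_gap_def by auto

lemma open_occ_Suc: "y \<noteq> i + 1 \<Longrightarrow> y + 1 \<noteq> j \<Longrightarrow> open_occ i j (y + 1) = open_occ i j y + 1"
  using ij unfolding open_occ_def by auto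

lemma close_occ_Suc:
  "x \<notin> occ_gap i j \<Longrightarrow> x + 1 \<notin> occ_gap i j \<Longrightarrow> close_occ i j (x + 1) = close_occ i j x + 1"
  using ij unfolding close_occ_def occ_gap_def by auto

lemma open_occ_image:
  assumes "j \<le> 2*n + 1"
  shows "open_occ i j ` {1..2*n} = {1..2*n + 4} - occ_gap i j"
proof
  show "open_occ i j ` {1..2*n} \<subseteq> {1..2*n + 4} - occ_gap i j"
    using assms open_occ_notin_occ_gap le_open_occ unfolding open_occ_def by fastforce
  show "{1..2*n + 4} - occ_gap i j \<subseteq> open_occ i j ` {1..2*n}"
  proof
    fix x assume x: "x \<in> {1..2*n + 4} - occ_gap i j"
    then have "close_occ i j x \<in> {1..2*n}"
      using assms ij unfolding close_occ_def occ_gap_def by auto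
    then show "x \<in> open_occ i j ` {1..2*n}" using open_occ_close_occ x by force
  qed
qed

lemma close_occ_image:
  "j \<le> 2*n + 1 \<Longrightarrow> close_occ i j ` ({1..2*n + 4} - occ_gap i j) = {1..2*n}"
  using open_occ_image[symmetric] by (simp add: image_image)

lemma contract_matching:
  assumes M: "M \<in> matchings (n + 2)" and occ: "(i, j) \<in> occ132 M"
  shows "map_prod (close_occ i j) (close_occ i j) ` (M - inner_arcs i j) \<in> matchings n"
    and "(i + 1, j - 1) \<in> map_prod (close_occ i j) (close_occ i j) ` (M - inner_arcs i j)"
proof -
  have "2 * (n + 2) = 2*n + 4" by simp
  with M have pm: "perfect_matching_on {1..2*n + 4} M"
    by (simp only: matchings_iff_perfect_matching_on)
  have inner: "inner_arcs i j \<subseteq> M"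
    using occ inner_arcs_subset_occ_arcs mem_occ132_iff by blast
  then have "j + 3 \<le> 2*n + 4"
    using perfect_matching_on_arcD[OF pm, of "i + 2" "j + 3"] unfolding inner_arcs_def by simp
  then have j: "j \<le> 2*n + 1" by simp
  have "perfect_matching_on ({1..2*n + 4} - occ_gap i j) (M - inner_arcs i j)"
    using perfect_matching_on_Diff[OF pm inner] by (simp add: endpoints_inner_arcs)
  moreover have "strict_mono_on ({1..2*n + 4} - occ_gap i j) (close_occ i j)"
    using strict_mono_on_close_occ by (rule monotone_on_subset) blast
  ultimately have "perfect_matching_on {1..2*n}
      (map_prod (close_occ i j) (close_occ i j) ` (M - inner_arcs i j))"
    using perfect_matching_on_image close_occ_image[OF j] by metis
  then show "map_prod (close_occ i j) (close_occ i j) ` (M - inner_arcs i j) \<in> matchings n"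
    by (simp add: matchings_iff_perfect_matching_on)
  have "(i + 1, j + 1) \<in> M - inner_arcs i j"
    using occ unfolding mem_occ132_iff inner_arcs_def by auto
  moreover have "close_occ i j (i + 1) = i + 1" "close_occ i j (j + 1) = j - 1"
    using ij unfolding close_occ_def by auto
  ultimately show "(i + 1, j - 1) \<in> map_prod (close_occ i j) (close_occ i j) ` (M - inner_arcs i j)"
    by (metis map_prod_simp image_eqI)
qed

lemma expand_matching:
  assumes M: "M \<in> matchings n" and arc: "(i + 1, j - 1) \<in> M"
  shows "map_prod (open_occ i j) (open_occ i j) ` M \<union> inner_arcs i j \<in> matchings (n + 2)"
    and "(i, j) \<in> occ132 (map_prod (open_occ i j) (open_occ i j) ` M \<union> inner_arcs i j)"
proof -
  have pm: "perfect_matching_on {1..2*n} M"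
    using M by (simp add: matchings_iff_perfect_matching_on)
  then have j: "j \<le> 2*n + 1" using perfect_matching_on_arcD[OF pm arc] by arith
  have "perfect_matching_on ({1..2*n + 4} - occ_gap i j) (map_prod (open_occ i j) (open_occ i j) ` M)"
    using perfect_matching_on_image[OF pm strict_mono_on_open_occ] open_occ_image[OF j] by metis
  moreover have "perfect_matching_on (occ_gap i j) (inner_arcs i j)"
    by (rule perfect_matching_onI) (use ij in \<open>auto simp: inner_arcs_def occ_gap_def\<close>)
  ultimately have "perfect_matching_on (({1..2*n + 4} - occ_gap i j) \<union> occ_gap i j)
      (map_prod (open_occ i j) (open_occ i j) ` M \<union> inner_arcs i j)"
    by (rule perfect_matching_on_Un) blast
  moreover have "({1..2*n + 4} - occ_gap i j) \<union> occ_gap i j = {1..2 * (n + 2)}"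
    using ij j unfolding occ_gap_def by auto
  ultimately show "map_prod (open_occ i j) (open_occ i j) ` M \<union> inner_arcs i j \<in> matchings (n + 2)"
    by (simp only: matchings_iff_perfect_matching_on)
  have "open_occ i j (i + 1) = i + 1" "open_occ i j (j - 1) = j + 1"
    using ij unfolding open_occ_def by auto
  then have "(i + 1, j + 1) \<in> map_prod (open_occ i j) (open_occ i j) ` M"
    using arc by (metis map_prod_simp image_eqI)
  then show "(i, j) \<in> occ132 (map_prod (open_occ i j) (open_occ i j) ` M \<union> inner_arcs i j)"
    using ij unfolding mem_occ132_iff inner_arcs_def by auto
qed

lemma expand_contract_matching:
  assumes pm: "perfect_matching_on A M" and inner: "inner_arcs i j \<subseteq> M"
  shows "map_prod (open_occ i j) (open_occ i j) `
      map_prod (close_occ i j) (close_occ i j) ` (M - inner_arcs i j) \<union> inner_arcs i j = M"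
proof -
  have "endpoints (M - inner_arcs i j) = A - occ_gap i j"
    using endpoints_perfect_matching_on perfect_matching_on_Diff[OF pm inner]
    by (simp add: endpoints_inner_arcs)
  then have "map_prod (open_occ i j) (open_occ i j) `
      map_prod (close_occ i j) (close_occ i j) ` (M - inner_arcs i j) = M - inner_arcs i j"
    using open_occ_close_occ by (intro map_prod_image_inverse) blast
  then show ?thesis using inner by blast
qed

lemma contract_expand_matching:
  "map_prod (close_occ i j) (close_occ i j) `
      (map_prod (open_occ i j) (open_occ i j) ` M \<union> inner_arcs i j - inner_arcs i j) = M"
proof -
  have "fst p \<in> occ_gap i j" if "p \<in> inner_arcs i j" for p
    using that unfolding inner_arcs_def occ_gap_def by auto
  then have "map_prod (open_occ i j) (open_occ i j) ` M \<union> inner_arcs i j - inner_arcs i j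
      = map_prod (open_occ i j) (open_occ i j) ` M"
    using open_occ_notin_occ_gap by fastforce
  then show ?thesis by (simp add: map_prod_image_inverse)
qed

lemma contract_occ132:
  assumes pm: "perfect_matching_on A M"
    and occ: "(i, j) \<in> occ132 M" "(a, b) \<in> occ132 M" "(a, b) \<noteq> (i, j)"
  defines "M' \<equiv> map_prod (close_occ i j) (close_occ i j) ` (M - inner_arcs i j)"
  shows "map_occ (close_occ i j) (a, b) \<in> occ132 M'"
    and "map_occ (open_occ i j) (map_occ (close_occ i j) (a, b)) = (a, b)"
    and "(i + 1, j - 1) \<notin> occ_arcs (map_occ (close_occ i j) (a, b))"
proof -
  have disj: "endpoints (occ_arcs (a, b)) \<inter> endpoints (occ_arcs (i, j)) = {}"
    using occ132_endpoints_disjoint[OF pm occ(2,1,3)] .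
  then have gap: "endpoints (occ_arcs (a, b)) \<subseteq> - occ_gap i j"
    using occ_gap_subset_endpoints by blast
  then have "a + 1 \<notin> occ_gap i j" "a + 2 \<notin> occ_gap i j" "a + 3 \<notin> occ_gap i j"
    "b + 1 \<notin> occ_gap i j" "b + 2 \<notin> occ_gap i j" "b + 3 \<notin> occ_gap i j"
    unfolding endpoints_occ_arcs by auto
  then have step: "\<forall>x\<in>{a + 1, a + 2, b + 1, b + 2}. close_occ i j (x + 1) = close_occ i j x + 1"
    using close_occ_Suc by (simp add: eval_nat_numeral)
  have pos: "0 < close_occ i j (a + 1)" "0 < close_occ i j (b + 1)"
    using close_occ_pos gap unfolding endpoints_occ_arcs by auto
  have "occ_arcs (a, b) \<subseteq> M - inner_arcs i j"
    using occ132_arcs_disjoint[OF pm occ(2,1,3)] inner_arcs_subset_occ_arcs occ(2) mem_occ132_iff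
    by blast
  then show "map_occ (close_occ i j) (a, b) \<in> occ132 M'"
    unfolding M'_def using map_occ_mem_occ132[OF occ(2) _ strict_mono_on_close_occ gap step pos]
    by blast
  show "map_occ (open_occ i j) (map_occ (close_occ i j) (a, b)) = (a, b)"
    using pos gap open_occ_close_occ unfolding endpoints_occ_arcs by (intro map_occ_map_occ) auto
  show "(i + 1, j - 1) \<notin> occ_arcs (map_occ (close_occ i j) (a, b))"
  proof
    assume "(i + 1, j - 1) \<in> occ_arcs (map_occ (close_occ i j) (a, b))"
    then have "(i + 1, j - 1) \<in> map_prod (close_occ i j) (close_occ i j) ` occ_arcs (a, b)"
      by (simp only: occ_arcs_map_occ[OF step pos])
    then obtain p where p: "p \<in> occ_arcs (a, b)" "(i + 1, j - 1) = map_prod (close_occ i j) (close_occ i j) p"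
      by (rule imageE)
    define u where "u = fst p"
    have u: "u \<in> endpoints (occ_arcs (a, b))" unfolding u_def endpoints_def using p(1) by blast
    have uv: "close_occ i j u = i + 1" unfolding u_def using p(2) by (cases p) simp
    have "i + 1 \<notin> occ_gap i j" "close_occ i j (i + 1) = i + 1"
      using ij unfolding occ_gap_def close_occ_def by auto
    then have "u = i + 1"
      using u gap uv inj_onD[OF strict_mono_on_imp_inj_on[OF strict_mono_on_close_occ]]
      by (metis ComplI subsetD)
    then show False using u disj unfolding endpoints_occ_arcs by auto
  qed
qed

lemma expand_occ132:
  assumes pm: "perfect_matching_on A M" and arc: "(i + 1, j - 1) \<in> M"
    and occ: "(a, b) \<in> occ132 M" and free: "(i + 1, j - 1) \<notin> occ_arcs (a, b)"
  defines "M' \<equiv> map_prod (open_occ i j) (open_occ i j) ` M \<union> inner_arcs i j"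
  shows "map_occ (open_occ i j) (a, b) \<in> occ132 M'"
    and "map_occ (close_occ i j) (map_occ (open_occ i j) (a, b)) = (a, b)"
    and "map_occ (open_occ i j) (a, b) \<noteq> (i, j)"
proof -
  have "i + 1 \<notin> endpoints (occ_arcs (a, b))" "j - 1 \<notin> endpoints (occ_arcs (a, b))"
    using endpoint_notin_endpoints[OF pm, of "occ_arcs (a, b)" "(i + 1, j - 1)"] occ arc free
    unfolding mem_occ132_iff by auto
  then have avoid: "x \<noteq> i + 1" "x + 1 \<noteq> j" if "x \<in> {a + 1, a + 2, b + 1, b + 2}" for x
    using that ij unfolding endpoints_occ_arcs by auto
  then have step: "\<forall>x\<in>{a + 1, a + 2, b + 1, b + 2}. open_occ i j (x + 1) = open_occ i j x + 1"
    using open_occ_Suc by blast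
  have pos: "0 < open_occ i j (a + 1)" "0 < open_occ i j (b + 1)"
    using le_open_occ[of "a + 1" i j] le_open_occ[of "b + 1" i j] by auto
  have "map_occ (open_occ i j) (a, b) \<in> occ132 (map_prod (open_occ i j) (open_occ i j) ` M)"
    using occ mem_occ132_iff by (intro map_occ_mem_occ132[OF occ _ strict_mono_on_open_occ _ step pos])
      auto
  then show "map_occ (open_occ i j) (a, b) \<in> occ132 M'"
    unfolding M'_def using occ132_mono by blast
  show "map_occ (close_occ i j) (map_occ (open_occ i j) (a, b)) = (a, b)"
    using pos by (intro map_occ_map_occ) simp_all
  show "map_occ (open_occ i j) (a, b) \<noteq> (i, j)"
  proof
    assume "map_occ (open_occ i j) (a, b) = (i, j)"
    then have "open_occ i j (a + 1) = open_occ i j (i + 1)"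
      using pos unfolding open_occ_def by (auto split: if_splits)
    then have "a + 1 = i + 1"
      using strict_mono_on_imp_inj_on[OF strict_mono_on_open_occ[of UNIV]] by (auto dest: injD)
    then show False using avoid(1)[of "a + 1"] by simp
  qed
qed

end

fun contract_occ :: "pointed_marked_matching \<Rightarrow> pointed_marked_matching" where
  "contract_occ ((M, S), (i, j)) =
    ((map_prod (close_occ i j) (close_occ i j) ` (M - inner_arcs i j),
      map_occ (close_occ i j) ` (S - {(i, j)})), (i + 1, j - 1))"

fun expand_arc :: "pointed_marked_matching \<Rightarrow> pointed_marked_matching" where
  "expand_arc ((M, S), (p, q)) = (let i = p - 1; j = q + 1 in
    ((map_prod (open_occ i j) (open_occ i j) ` M \<union> inner_arcs i j,
      insert (i, j) (map_occ (open_occ i j) ` S)), (i, j)))"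

lemma contract_occ_mem_marked_pointed_arc:
  assumes "x \<in> marked_pointed_occ (n + 2) (Suc m)"
  shows "contract_occ x \<in> marked_pointed_arc n m \<and> expand_arc (contract_occ x) = x"
proof -
  obtain M S i j where x: "x = ((M, S), (i, j))" and M: "M \<in> matchings (n + 2)"
    and S: "S \<subseteq> occ132 M" "card S = Suc m" "(i, j) \<in> S"
    using assms unfolding marked_pointed_occ_def marked_matchings_def by auto
  have pm: "perfect_matching_on {1..2 * (n + 2)} M"
    using M by (simp only: matchings_iff_perfect_matching_on)
  have occ: "(i, j) \<in> occ132 M" using S by blast
  then have ij: "i + 3 \<le> j" by (simp add: mem_occ132_iff)
  let ?M' = "map_prod (close_occ i j) (close_occ i j) ` (M - inner_arcs i j)"
  let ?S' = "map_occ (close_occ i j) ` (S - {(i, j)})"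
  have contracted: "map_occ (close_occ i j) y \<in> occ132 ?M'"
    "map_occ (open_occ i j) (map_occ (close_occ i j) y) = y"
    "(i + 1, j - 1) \<notin> occ_arcs (map_occ (close_occ i j) y)" if "y \<in> S - {(i, j)}" for y
    using contract_occ132[OF ij pm occ, of "fst y" "snd y"] that S(1) by (auto simp del: map_occ.simps)
  have "inj_on (map_occ (close_occ i j)) (S - {(i, j)})"
    using contracted(2) by (rule inj_on_inverseI)
  then have "card ?S' = m" using S by (simp add: card_image card_Diff_singleton)
  moreover have "?S' \<subseteq> occ132 ?M'" using contracted(1) by (rule image_subsetI)
  moreover have "(i + 1, j - 1) \<in> ?M' - \<Union>(occ_arcs ` ?S')"
    using contract_matching(2)[OF ij M occ] contracted(3) by blast
  ultimately have "contract_occ x \<in> marked_pointed_arc n m"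
    using contract_matching(1)[OF ij M occ] x
    unfolding marked_pointed_arc_def marked_matchings_def by auto
  moreover have "expand_arc (contract_occ x) = x"
  proof -
    have "inner_arcs i j \<subseteq> M" using occ inner_arcs_subset_occ_arcs mem_occ132_iff by blast
    then have "map_prod (open_occ i j) (open_occ i j) ` ?M' \<union> inner_arcs i j = M"
      by (rule expand_contract_matching[OF ij pm])
    moreover have "map_occ (open_occ i j) ` ?S' = S - {(i, j)}"
      using contracted(2) by (force simp: image_image simp del: map_occ.simps)
    then have "insert (i, j) (map_occ (open_occ i j) ` ?S') = S" using S(3) by auto
    moreover have "i + 1 - 1 = i" "j - 1 + 1 = j" using ij by auto
    ultimately show ?thesis using x by (simp add: Let_def del: map_occ.simps)
  qed
  ultimately show ?thesis ..
qed

lemma expand_arc_mem_marked_pointed_occ: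
  assumes "y \<in> marked_pointed_arc n m"
  shows "expand_arc y \<in> marked_pointed_occ (n + 2) (Suc m) \<and> contract_occ (expand_arc y) = y"
proof -
  obtain M S p q where y: "y = ((M, S), (p, q))" and M: "M \<in> matchings n"
    and S: "S \<subseteq> occ132 M" "card S = m" and arc: "(p, q) \<in> M" "(p, q) \<notin> \<Union>(occ_arcs ` S)"
    using assms unfolding marked_pointed_arc_def marked_matchings_def by auto
  have pm: "perfect_matching_on {1..2*n} M" using M by (simp add: matchings_iff_perfect_matching_on)
  define i j where "i = p - 1" and "j = q + 1"
  have pq: "p = i + 1" "q = j - 1" and ij: "i + 3 \<le> j"
    using perfect_matching_on_arcD[OF pm arc(1)] unfolding i_def j_def by auto
  let ?M' = "map_prod (open_occ i j) (open_occ i j) ` M \<union> inner_arcs i j"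
  let ?S' = "insert (i, j) (map_occ (open_occ i j) ` S)"
  have expanded: "map_occ (open_occ i j) x \<in> occ132 ?M'"
    "map_occ (close_occ i j) (map_occ (open_occ i j) x) = x" "map_occ (open_occ i j) x \<noteq> (i, j)"
    if "x \<in> S" for x
    using expand_occ132[OF ij pm, of "fst x" "snd x"] that S(1) arc pq by (auto simp del: map_occ.simps)
  have "inj_on (map_occ (open_occ i j)) S"
    using expanded(2) by (rule inj_on_inverseI)
  moreover have "(i, j) \<notin> map_occ (open_occ i j) ` S" using expanded(3) by (metis imageE)
  ultimately have "card ?S' = Suc m"
    using S finite_subset[OF S(1) finite_occ132[OF M]] by (simp add: card_image del: map_occ.simps)
  moreover have "?S' \<subseteq> occ132 ?M'"
    using expanded(1) expand_matching(2)[OF ij M] arc pq by blast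
  moreover have exp: "expand_arc y = ((?M', ?S'), (i, j))"
    unfolding y i_def j_def by (simp add: Let_def del: map_occ.simps)
  ultimately have "expand_arc y \<in> marked_pointed_occ (n + 2) (Suc m)"
    using expand_matching(1)[OF ij M] arc pq
    unfolding marked_pointed_occ_def marked_matchings_def by simp
  moreover have "map_occ (close_occ i j) ` (?S' - {(i, j)}) = S"
    using expanded(2,3) by (force simp: image_image simp del: map_occ.simps)
  then have "contract_occ ((?M', ?S'), (i, j)) = ((M, S), (i + 1, j - 1))"
    using contract_expand_matching[OF ij, of M] by (simp only: contract_occ.simps)
  then have "contract_occ (expand_arc y) = y" using exp y pq by simp
  ultimately show ?thesis ..
qed

lemma marked_matchings_recurrence:
  "Suc m * card (marked_matchings (n + 2) (Suc m)) = (n - 3 * m) * card (marked_matchings n m)"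
proof -
  have "bij_betw contract_occ (marked_pointed_occ (n + 2) (Suc m)) (marked_pointed_arc n m)"
    using contract_occ_mem_marked_pointed_arc expand_arc_mem_marked_pointed_occ
    by (intro bij_betw_byWitness[where f' = expand_arc]) blast+
  then show ?thesis
    using bij_betw_same_card card_marked_pointed_occ card_marked_pointed_arc by metis
qed

lemma card_marked_matchings:
  "card (marked_matchings n m) = (n - 2 * m choose m) * odd_dfact (n - 2 * m)"
proof (induction m arbitrary: n)
  case 0
  then show ?case using card_marked_matchings_eq_sum[of n 0] card_matchings by simp
next
  case (Suc m)
  show ?case
  proof (cases "n < 2")
    case True
    then have "card (marked_matchings n (Suc m)) = 0"
      using card_marked_matchings_eq_sum[of n "Suc m"] occ132_empty_if_small by (simp add: num_occ132_def)
    then show ?thesis using True by simp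
  next
    case False
    then obtain k where n: "n = k + 2" by (metis add.commute le_Suc_ex not_less add_2_eq_Suc')
    define N where "N = k - 2 * m"
    have "Suc m * card (marked_matchings n (Suc m)) = (k - 3 * m) * ((N choose m) * odd_dfact N)"
      using marked_matchings_recurrence[of m k] Suc.IH[of k] n N_def by simp
    also have "\<dots> = ((N - m) * (N choose m)) * odd_dfact N" unfolding N_def by (simp add: mult.assoc)
    also have "\<dots> = (Suc m * (N choose Suc m)) * odd_dfact N"
      by (simp only: binomial_absorb_comp binomial_absorption)
    finally have "card (marked_matchings n (Suc m)) = (N choose Suc m) * odd_dfact N"
      by (simp only: mult.assoc mult_left_cancel)
    moreover have "n - 2 * Suc m = N" unfolding N_def n by simp
    ultimately show ?thesis by simp
  qed
qed

section \<open>The generating function\<close>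

unbundle fps_syntax

lemma D_fps_nth:
  "D_fps $ n = (\<Sum>m=0..n. of_nat ((n - 2*m choose m) * odd_dfact (n - 2*m)) * [:-1, 1:] ^ m)"
proof -
  let ?u = "[:0, 1:] :: int poly"
  have "D_fps $ n = (\<Sum>k=0..n. of_nat (d132 n k) * ?u ^ k)"
    unfolding D_fps_def by (simp add: monom_altdef of_nat_mult_conv_smult)
  also have "\<dots> = (\<Sum>k=0..n. \<Sum>M\<in>{M \<in> matchings n. num_occ132 M = k}. ?u ^ num_occ132 M)"
    unfolding d132_def by (rule sum.cong) auto
  also have "\<dots> = (\<Sum>M\<in>matchings n. ?u ^ num_occ132 M)"
    by (rule sum.group) (use finite_matchings num_occ132_le in auto)
  also have "\<dots> = (\<Sum>M\<in>matchings n. \<Sum>m=0..n. of_nat (num_occ132 M choose m) * [:-1, 1:] ^ m)"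
  proof (rule sum.cong)
    fix M assume M: "M \<in> matchings n"
    have "?u = [:-1, 1:] + 1" by (simp add: one_pCons)
    then have "?u ^ num_occ132 M = (\<Sum>m=0..num_occ132 M. of_nat (num_occ132 M choose m) * [:-1, 1:] ^ m)"
      by (simp add: binomial_ring atLeast0AtMost)
    also have "\<dots> = (\<Sum>m=0..n. of_nat (num_occ132 M choose m) * [:-1, 1:] ^ m)"
      by (rule sum.mono_neutral_left) (use num_occ132_le[OF M] in auto)
    finally show "?u ^ num_occ132 M = (\<Sum>m=0..n. of_nat (num_occ132 M choose m) * [:-1, 1:] ^ m)" .
  qed simp
  also have "\<dots> = (\<Sum>m=0..n. of_nat (\<Sum>M\<in>matchings n. num_occ132 M choose m) * [:-1, 1:] ^ m)"
    by (subst sum.swap) (simp add: sum_distrib_right)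
  also have "\<dots> = (\<Sum>m=0..n. of_nat ((n - 2*m choose m) * odd_dfact (n - 2*m)) * [:-1, 1:] ^ m)"
    by (simp only: card_marked_matchings_eq_sum[symmetric] card_marked_matchings)
  finally show ?thesis .
qed

lemma substitution_power_nth:
  fixes c :: "'a :: comm_ring_1"
  shows "(fps_X + fps_const c * fps_X ^ 3) ^ k $ n =
    (\<Sum>m=0..k. if n = k + 2*m then of_nat (k choose m) * c ^ m else 0)"
proof -
  have "(fps_X + fps_const c * fps_X ^ 3) ^ k = (fps_const c * fps_X ^ 3 + fps_X) ^ k"
    by (simp add: add.commute)
  also have "\<dots> = (\<Sum>m=0..k. of_nat (k choose m) * (fps_const c * fps_X ^ 3) ^ m * fps_X ^ (k - m))"
    by (simp only: binomial_ring atLeast0AtMost)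
  also have "\<dots> = (\<Sum>m=0..k. fps_const (of_nat (k choose m) * c ^ m) * fps_X ^ (k + 2*m))"
  proof (rule sum.cong)
    fix m assume "m \<in> {0..k}"
    then have "fps_X ^ (3*m) * fps_X ^ (k - m) = (fps_X :: 'a fps) ^ (k + 2*m)"
      by (simp add: power_add[symmetric])
    then show "of_nat (k choose m) * (fps_const c * fps_X ^ 3) ^ m * fps_X ^ (k - m) =
        fps_const (of_nat (k choose m) * c ^ m) * fps_X ^ (k + 2*m)"
      by (simp add: power_mult_distrib power_mult fps_of_nat[symmetric] fps_const_mult[symmetric]
          mult.assoc del: fps_const_mult)
  qed simp
  finally show ?thesis by (simp add: fps_sum_nth fps_X_power_nth if_distrib cong: if_cong)
qed

lemma F_fps_compose_nth:
  "fps_compose F_fps (fps_X + fps_const [:-1, 1:] * fps_X ^ 3) $ n =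
    (\<Sum>m=0..n. of_nat ((n - 2*m choose m) * odd_dfact (n - 2*m)) * [:-1, 1:] ^ m)"
proof -
  define h where "h k m = (if n = k + 2*m
    then of_nat (odd_dfact k) * (of_nat (k choose m) * [:-1, 1:] ^ m) else (0 :: int poly))" for k m
  have "fps_compose F_fps (fps_X + fps_const [:-1, 1:] * fps_X ^ 3) $ n = (\<Sum>k=0..n. \<Sum>m=0..k. h k m)"
    by (simp add: fps_compose_nth substitution_power_nth F_fps_def sum_distrib_left h_def
        if_distrib cong: if_cong)
  also have "\<dots> = (\<Sum>k=0..n. \<Sum>m=0..n. h k m)"
    by (intro sum.cong refl sum.mono_neutral_left) (auto simp: h_def)
  also have "\<dots> = (\<Sum>m=0..n. \<Sum>k=0..n. h k m)" by (rule sum.swap)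
  also have "\<dots> = (\<Sum>m=0..n. of_nat ((n - 2*m choose m) * odd_dfact (n - 2*m)) * [:-1, 1:] ^ m)"
  proof (rule sum.cong)
    fix m
    have "(\<Sum>k=0..n. h k m) = (\<Sum>k=0..n. if k = n - 2*m then (if 2*m \<le> n
        then of_nat (odd_dfact (n - 2*m)) * (of_nat (n - 2*m choose m) * [:-1, 1:] ^ m) else 0) else 0)"
      by (rule sum.cong) (auto simp: h_def)
    also have "\<dots> = of_nat ((n - 2*m choose m) * odd_dfact (n - 2*m)) * [:-1, 1:] ^ m"
      by (cases "2*m \<le> n") (auto simp: sum.delta mult_ac)
    finally show "(\<Sum>k=0..n. h k m) = of_nat ((n - 2*m choose m) * odd_dfact (n - 2*m)) * [:-1, 1:] ^ m" .
  qed simp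
  finally show ?thesis .
qed

theorem theorem4:
  shows "D_fps = fps_compose F_fps (fps_X + fps_const [:-1, 1:] * fps_X ^ 3)"
  by (rule fps_ext) (simp only: D_fps_nth F_fps_compose_nth)

end
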